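(* Let $\{\mathbf{W}(t)\}_{t \geq 0}$ be i.i.d. random $n \times n$ row-stochastic matrices with mean $\overline{\mathbf{W}} = \mathbb{E}\{\mathbf{W}(t)\}$, each of the block form $$\mathbf{W}(t) = \begin{pmatrix} \mathbf{I}_{n_s} & \mathbf{0} \\ \mathbf{B}(t) & \mathbf{D}(t) \end{pmatrix},$$ with $1 \le n_s < n$, and correspondingly $\overline{\mathbf{W}} = \begin{pmatrix} \mathbf{I}_{n_s} & \mathbf{0} \\ \overline{\mathbf{B}} & \overline{\mathbf{D}} \end{pmatrix}$. Assume $\|\overline{\mathbf{D}}\|_2 < 1$ and $\mathbb{E}\{\|\mathbf{D}(t)\|_2\} = \|\overline{\mathbf{D}}\|_2$. For $t \geq s$ let $\boldsymbol{\Phi}(s,t) = \mathbf{W}(t)\mathbf{W}(t-1)\cdots\mathbf{W}(s)$. Then $\mathbf{D}(t)\mathbf{D}(t-1)\cdots\mathbf{D}(s) \to \mathbf{0}$ almost surely as $t - s \to \infty$, so that $\boldsymbol{\Phi}(s,t)$ converges almost surely to $$\begin{pmatrix} \mathbf{I} & \mathbf{0} \\ \mathbf{B}(s,t) & \mathbf{0} \end{pmatrix} \quad\text{as } |t-s|\to\infty$$ (in the sense that the difference tends to zero), where $\mathbf{B}(s,t) = \sum_{q=s}^{t} \big(\mathbf{D}(t)\cdots\mathbf{D}(q+1)\big)\mathbf{B}(q)$ (the empty product for $q=t$ being the identity) is bounded almost surely.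
   Context: This models opinion dynamics $\mathbf{x}(t+1) = \mathbf{W}(t)\mathbf{x}(t)$ in which the first $n_s$ agents are stubborn (never change opinion). $\|\cdot\|_2$ is the spectral norm. *)

theory Defs
  imports "HOL-Probability.Probability"
begin

text \<open>Agents are indexed by the sum type 's + 'f: the Inl-indices are the n_s stubborn
agents (n_s = CARD('s) \<ge> 1), the Inr-indices the remaining n - n_s \<ge> 1 agents.\<close>

definition blockmat ::
  "real^'s::finite^'s \<Rightarrow> real^'f::finite^'s \<Rightarrow> real^'s^'f \<Rightarrow> real^'f^'f \<Rightarrow> real^('s+'f)^('s+'f)" where
  "blockmat A11 A12 A21 A22 = (\<chi> i j. case i of
      Inl a \<Rightarrow> (case j of Inl b \<Rightarrow> A11 $ a $ b | Inr b \<Rightarrow> A12 $ a $ b)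
    | Inr a \<Rightarrow> (case j of Inl b \<Rightarrow> A21 $ a $ b | Inr b \<Rightarrow> A22 $ a $ b))"

definition blkB :: "real^('s::finite+'f::finite)^('s+'f) \<Rightarrow> real^'s^'f" where
  "blkB A = (\<chi> i j. A $ Inr i $ Inl j)"

definition blkD :: "real^('s::finite+'f::finite)^('s+'f) \<Rightarrow> real^'f^'f" where
  "blkD A = (\<chi> i j. A $ Inr i $ Inr j)"

definition row_stochastic :: "real^'n^'n \<Rightarrow> bool" where
  "row_stochastic A \<longleftrightarrow> (\<forall>i j. 0 \<le> A $ i $ j) \<and> (\<forall>i. (\<Sum>j\<in>UNIV. A $ i $ j) = 1)"

definition spectral_norm :: "real^'n^'m \<Rightarrow> real" where
  "spectral_norm A = onorm (\<lambda>x. A *v x)"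

text \<open>lprod A s t = A t ** A (t-1) ** ... ** A s for s \<le> t; the identity (empty product) for t < s.\<close>
primrec lprod :: "(nat \<Rightarrow> real^'n^'n) \<Rightarrow> nat \<Rightarrow> nat \<Rightarrow> real^'n^'n" where
  "lprod A s 0 = (if s = 0 then A 0 else mat 1)"
| "lprod A s (Suc t) = (if s \<le> Suc t then A (Suc t) ** lprod A s t else mat 1)"

definition accB :: "(nat \<Rightarrow> real^'s^'f) \<Rightarrow> (nat \<Rightarrow> real^'f^'f) \<Rightarrow> nat \<Rightarrow> nat \<Rightarrow> real^'s^'f" where
  "accB Bf Df s t = (\<Sum>q\<in>{s..t}. lprod Df (q+1) t ** Bf q)"

end

theory Submission imports Defs begin

text \<open>Block unitriangularity is preserved under products, so \<Phi>(s,t) has lower blocks B(s,t) and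
  D(t)\<cdots>D(s), and everything reduces to D(t)\<cdots>D(s) \<rightarrow> 0. The spectral norm of that product is
  at most the product of the independent factors ||D(r)||, each of mean ||D_bar|| < 1, so these
  products have summable expectations and hence tend to 0 almost surely. Boundedness of B(s,t) is
  deterministic: its entries are entries of the row-stochastic matrix \<Phi>(s,t).\<close>

lemma lprod_below: "t < s \<Longrightarrow> lprod A s t = mat 1"
  by (induction t) auto

lemma lprod_self: "lprod A s s = A s"
  by (cases s) (auto simp: lprod_below)

lemma sum_UNIV_Plus:
  "(\<Sum>k\<in>(UNIV::('a::finite + 'b::finite) set). g k) = (\<Sum>k\<in>UNIV. g (Inl k)) + (\<Sum>k\<in>UNIV. g (Inr k))"
  using sum.Plus[of "UNIV::'a set" "UNIV::'b set" g] by (simp add: comp_def)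

lemma unitriangular_blockmat_mult:
  fixes B1 B2 :: "real^'s::finite^'f::finite" and D1 D2 :: "real^'f^'f"
  shows "blockmat (mat 1) 0 B1 D1 ** blockmat (mat 1) 0 B2 D2
       = blockmat (mat 1) 0 (B1 + D1 ** B2) (D1 ** D2)"
  unfolding vec_eq_iff
proof (intro allI)
  fix i j :: "'s + 'f"
  show "(blockmat (mat 1) 0 B1 D1 ** blockmat (mat 1) 0 B2 D2) $ i $ j
      = blockmat (mat 1) 0 (B1 + D1 ** B2) (D1 ** D2) $ i $ j"
    by (cases i; cases j)
      (simp_all add: blockmat_def matrix_matrix_mult_def sum_UNIV_Plus mat_def
        if_distrib[where f="\<lambda>x. x * _"] if_distrib[where f="\<lambda>x. _ * x"] cong: if_cong)
qed

lemma matrix_sum_ldistrib: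
  "finite S \<Longrightarrow> D ** (\<Sum>q\<in>S. X q) = (\<Sum>q\<in>S. (D::real^'n::finite^'m::finite) ** X q)"
  by (induction S rule: finite_induct) (auto simp: matrix_add_ldistrib)

lemma accB_Suc:
  assumes "s \<le> t"
  shows "accB Bf Df s (Suc t) = Bf (Suc t) + Df (Suc t) ** accB Bf Df s t"
proof -
  have "accB Bf Df s (Suc t)
      = lprod Df (Suc t + 1) (Suc t) ** Bf (Suc t) + (\<Sum>q\<in>{s..t}. lprod Df (q+1) (Suc t) ** Bf q)"
    unfolding accB_def using assms by (simp add: atLeastAtMostSuc_conv add.commute)
  also have "(\<Sum>q\<in>{s..t}. lprod Df (q+1) (Suc t) ** Bf q)
           = (\<Sum>q\<in>{s..t}. Df (Suc t) ** (lprod Df (q+1) t ** Bf q))"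
    by (intro sum.cong) (auto simp: matrix_mul_assoc)
  also have "\<dots> = Df (Suc t) ** accB Bf Df s t"
    unfolding accB_def by (simp add: matrix_sum_ldistrib)
  finally show ?thesis by (simp add: lprod_below)
qed

lemma lprod_unitriangular_blockmat:
  fixes A :: "nat \<Rightarrow> real^('s::finite+'f::finite)^('s+'f)"
  assumes blk: "\<And>q. A q = blockmat (mat 1) 0 (blkB (A q)) (blkD (A q))"
    and "s \<le> t"
  shows "lprod A s t = blockmat (mat 1) 0 (accB (\<lambda>q. blkB (A q)) (\<lambda>q. blkD (A q)) s t)
                                         (lprod (\<lambda>q. blkD (A q)) s t)"
  using \<open>s \<le> t\<close>
proof (induction t rule: nat_induct_at_least)
  case base
  then show ?case
    by (subst blk) (simp add: lprod_self accB_def lprod_below)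
next
  case (Suc t)
  have "lprod A s (Suc t) = A (Suc t) ** lprod A s t"
    using Suc by simp
  also note blk
  also note Suc.IH
  finally show ?case
    using Suc
    by (simp add: unitriangular_blockmat_mult accB_Suc)
qed

lemma row_stochastic_mult: "row_stochastic A \<Longrightarrow> row_stochastic B \<Longrightarrow> row_stochastic (A ** B)"
  unfolding row_stochastic_def matrix_matrix_mult_def
  by (auto intro!: sum_nonneg simp: sum.swap[where A=UNIV] sum_distrib_left[symmetric])

lemma row_stochastic_lprod:
  assumes "\<And>q. row_stochastic (A q)" and "s \<le> t"
  shows "row_stochastic (lprod A s t)"
  using \<open>s \<le> t\<close>
  by (induction t rule: nat_induct_at_least) (simp_all add: lprod_self assms(1) row_stochastic_mult)

lemma row_stochastic_abs_entry_le_1: "row_stochastic A \<Longrightarrow> \<bar>A $ i $ j\<bar> \<le> 1"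
  unfolding row_stochastic_def by (metis abs_of_nonneg finite member_le_sum UNIV_I)

lemma norm_matrix_le_sum_abs:
  "norm (X::real^'n::finite^'m::finite) \<le> (\<Sum>i\<in>UNIV. \<Sum>j\<in>UNIV. \<bar>X $ i $ j\<bar>)"
proof -
  have "norm X \<le> (\<Sum>i\<in>UNIV. \<bar>norm (X $ i)\<bar>)"
    unfolding norm_vec_def by (rule order_trans[OF L2_set_le_sum]) auto
  also have "\<dots> \<le> (\<Sum>i\<in>UNIV. \<Sum>j\<in>UNIV. \<bar>X $ i $ j\<bar>)"
    by (intro sum_mono) (simp add: norm_le_l1_cart)
  finally show ?thesis .
qed

lemma spectral_norm_nonneg: "0 \<le> spectral_norm (A::real^'n::finite^'m::finite)"
  unfolding spectral_norm_def by (rule onorm_pos_le) simp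

lemma abs_entry_le_spectral_norm: "\<bar>(A::real^'n::finite^'m::finite) $ i $ j\<bar> \<le> spectral_norm A"
  unfolding spectral_norm_def by (rule matrix_component_le_onorm)

lemma spectral_norm_le_entry_bound:
  fixes A :: "real^'n::finite^'m::finite"
  assumes "\<And>i j. \<bar>A $ i $ j\<bar> \<le> c"
  shows "spectral_norm A \<le> real CARD('m) * real CARD('n) * c"
  unfolding spectral_norm_def using assms by (rule onorm_le_matrix_component)

lemma spectral_norm_blkD_le_if_row_stochastic:
  fixes A :: "real^('s::finite+'f::finite)^('s+'f)"
  assumes "row_stochastic A"
  shows "spectral_norm (blkD A) \<le> real CARD('f) * real CARD('f)"
proof -
  have "\<bar>blkD A $ i $ j\<bar> \<le> 1" for i j
    using row_stochastic_abs_entry_le_1[OF assms] by (simp add: blkD_def)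
  then have "spectral_norm (blkD A) \<le> real CARD('f) * real CARD('f) * 1"
    by (rule spectral_norm_le_entry_bound)
  then show ?thesis
    by simp
qed

lemma spectral_norm_mult_le:
  "spectral_norm ((A::real^'n::finite^'n) ** B) \<le> spectral_norm A * spectral_norm B"
proof -
  have "(\<lambda>x. (A ** B) *v x) = (\<lambda>x. A *v x) \<circ> (\<lambda>x. B *v x)"
    by (auto simp: matrix_vector_mul_assoc)
  then show ?thesis
    unfolding spectral_norm_def by (simp add: onorm_compose)
qed

lemma spectral_norm_lprod_le:
  assumes "s \<le> t"
  shows "spectral_norm (lprod (A::nat \<Rightarrow> real^'n::finite^'n) s t) \<le> (\<Prod>r\<in>{s..t}. spectral_norm (A r))"
  using assms
proof (induction t rule: nat_induct_at_least)
  case base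
  then show ?case by (simp add: lprod_self)
next
  case (Suc t)
  have "spectral_norm (lprod A s (Suc t)) \<le> spectral_norm (A (Suc t)) * spectral_norm (lprod A s t)"
    using Suc by (simp add: spectral_norm_mult_le)
  also have "\<dots> \<le> spectral_norm (A (Suc t)) * (\<Prod>r\<in>{s..t}. spectral_norm (A r))"
    by (intro mult_left_mono Suc.IH spectral_norm_nonneg)
  finally show ?case
    using Suc by (simp add: mult.commute)
qed

lemma spectral_norm_triangle:
  "spectral_norm ((A::real^'n::finite^'m::finite) + B) \<le> spectral_norm A + spectral_norm B"
  unfolding spectral_norm_def matrix_vector_mult_add_rdistrib
  by (intro onorm_triangle matrix_vector_mul_bounded_linear)

lemma spectral_norm_lipschitz:
  "(real CARD('m) * real CARD('n))-lipschitz_on UNIV (spectral_norm :: real^'n::finite^'m::finite \<Rightarrow> real)"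
proof (rule lipschitz_onI)
  have diff_le: "spectral_norm A - spectral_norm B \<le> real CARD('m) * real CARD('n) * dist A B"
    for A B :: "real^'n^'m"
  proof -
    have "spectral_norm A \<le> spectral_norm (A - B) + spectral_norm B"
      using spectral_norm_triangle[of "A - B" B] by simp
    moreover have "\<bar>(A - B) $ i $ j\<bar> \<le> dist A B" for i j
      unfolding dist_norm
      by (rule order_trans[OF component_le_norm_cart Finite_Cartesian_Product.norm_nth_le])
    then have "spectral_norm (A - B) \<le> real CARD('m) * real CARD('n) * dist A B"
      by (rule spectral_norm_le_entry_bound)
    ultimately show ?thesis by simp
  qed
  fix A B :: "real^'n^'m"
  show "dist (spectral_norm A) (spectral_norm B) \<le> real CARD('m) * real CARD('n) * dist A B"
    using diff_le[of A B] diff_le[of B A] by (simp add: dist_real_def dist_commute abs_le_iff)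
qed simp

lemma spectral_norm_blkD_measurable:
  "(\<lambda>A::real^('s::finite+'f::finite)^('s+'f). spectral_norm (blkD A)) \<in> borel_measurable borel"
proof (rule borel_measurable_continuous_onI)
  have "continuous_on UNIV (blkD :: real^('s+'f)^('s+'f) \<Rightarrow> _)"
    unfolding blkD_def by (intro continuous_intros)
  with lipschitz_on_continuous_on[OF spectral_norm_lipschitz]
  show "continuous_on UNIV (\<lambda>A::real^('s+'f)^('s+'f). spectral_norm (blkD A))"
    by (rule continuous_on_compose2) auto
qed

lemma tendsto_lprod_zero:
  fixes D :: "nat \<Rightarrow> real^'n::finite^'n"
  assumes "(\<lambda>t. \<Prod>r\<in>{s..t}. spectral_norm (D r)) \<longlonglongrightarrow> 0"
  shows "lprod D s \<longlonglongrightarrow> 0"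
proof (intro vec_tendstoI)
  fix i j
  have "\<forall>\<^sub>F t in sequentially. norm (lprod D s t $ i $ j) \<le> (\<Prod>r\<in>{s..t}. spectral_norm (D r))"
    unfolding eventually_sequentially
  proof (intro exI allI impI)
    fix t
    assume "s \<le> t"
    have "norm (lprod D s t $ i $ j) \<le> spectral_norm (lprod D s t)"
      using abs_entry_le_spectral_norm by simp
    also have "\<dots> \<le> (\<Prod>r\<in>{s..t}. spectral_norm (D r))"
      using \<open>s \<le> t\<close> by (rule spectral_norm_lprod_le)
    finally show "norm (lprod D s t $ i $ j) \<le> (\<Prod>r\<in>{s..t}. spectral_norm (D r))" .
  qed
  with assms show "((\<lambda>t. lprod D s t $ i $ j) \<longlongrightarrow> 0 $ i $ j) sequentially"
    by (simp add: Lim_null_comparison)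
qed

lemma tendsto_blockmat_zero:
  assumes "(P \<longlongrightarrow> 0) F"
  shows "((\<lambda>x. blockmat 0 0 0 (P x)) \<longlongrightarrow> 0) F"
proof (intro vec_tendstoI)
  fix i j
  show "((\<lambda>x. blockmat 0 0 0 (P x) $ i $ j) \<longlongrightarrow> 0 $ i $ j) F"
  proof (cases i; cases j)
    fix a b assume "i = Inr a" "j = Inr b"
    then show ?thesis
      using tendsto_vec_nth[OF tendsto_vec_nth[OF assms, of a], of b] by (simp add: blockmat_def)
  qed (simp_all add: blockmat_def)
qed

lemma lprod_minus_limit_tendsto_zero:
  fixes A :: "nat \<Rightarrow> real^('s::finite+'f::finite)^('s+'f)"
  assumes blk: "\<And>q. A q = blockmat (mat 1) 0 (blkB (A q)) (blkD (A q))"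
    and D_lim: "lprod (\<lambda>q. blkD (A q)) s \<longlonglongrightarrow> 0"
  shows "(\<lambda>t. lprod A s t - blockmat (mat 1) 0 (accB (\<lambda>q. blkB (A q)) (\<lambda>q. blkD (A q)) s t) 0)
           \<longlonglongrightarrow> 0"
proof (rule Lim_transform_eventually)
  show "(\<lambda>t. blockmat 0 0 0 (lprod (\<lambda>q. blkD (A q)) s t)) \<longlonglongrightarrow> 0"
    using D_lim by (rule tendsto_blockmat_zero)
  have diff: "blockmat (mat 1) 0 X P - blockmat (mat 1) 0 X 0 = blockmat 0 0 0 P" for X P
    unfolding vec_eq_iff by (auto simp: blockmat_def split: sum.split)
  show "\<forall>\<^sub>F t in sequentially. blockmat 0 0 0 (lprod (\<lambda>q. blkD (A q)) s t)
      = lprod A s t - blockmat (mat 1) 0 (accB (\<lambda>q. blkB (A q)) (\<lambda>q. blkD (A q)) s t) 0"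
    unfolding eventually_sequentially
    using lprod_unitriangular_blockmat[of A, OF blk] by (intro exI[of _ s]) (simp add: diff)
qed

lemma norm_accB_le:
  fixes A :: "nat \<Rightarrow> real^('s::finite+'f::finite)^('s+'f)"
  assumes blk: "\<And>q. A q = blockmat (mat 1) 0 (blkB (A q)) (blkD (A q))"
    and stoch: "\<And>q. row_stochastic (A q)"
    and "s \<le> t"
  shows "norm (accB (\<lambda>q. blkB (A q)) (\<lambda>q. blkD (A q)) s t) \<le> real CARD('f) * real CARD('s)"
proof -
  let ?X = "accB (\<lambda>q. blkB (A q)) (\<lambda>q. blkD (A q)) s t"
  have "?X $ i $ j = lprod A s t $ Inr i $ Inl j" for i j
    using lprod_unitriangular_blockmat[OF blk \<open>s \<le> t\<close>] by (simp add: blockmat_def)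
  then have "\<bar>?X $ i $ j\<bar> \<le> 1" for i j
    using row_stochastic_abs_entry_le_1[OF row_stochastic_lprod[OF stoch \<open>s \<le> t\<close>]] by simp
  then have "(\<Sum>i\<in>UNIV. \<Sum>j\<in>UNIV. \<bar>?X $ i $ j\<bar>) \<le> (\<Sum>i\<in>(UNIV::'f set). \<Sum>j\<in>(UNIV::'s set). 1)"
    by (intro sum_mono)
  with norm_matrix_le_sum_abs[of ?X] show ?thesis
    by simp
qed

lemma AE_tendsto_zero_if_summable_integral:
  fixes X :: "nat \<Rightarrow> 'a \<Rightarrow> real"
  assumes int: "\<And>k. integrable M (X k)"
    and nonneg: "\<And>k x. 0 \<le> X k x"
    and summ: "summable (\<lambda>k. integral\<^sup>L M (X k))"
  shows "AE x in M. (\<lambda>k. X k x) \<longlonglongrightarrow> 0"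
proof -
  have [measurable]: "X k \<in> borel_measurable M" for k
    using int by (rule borel_measurable_integrable)
  have "(\<integral>\<^sup>+x. (\<Sum>k. ennreal (X k x)) \<partial>M) = (\<Sum>k. ennreal (integral\<^sup>L M (X k)))"
    by (simp add: nn_integral_suminf nn_integral_eq_integral int nonneg)
  also have "\<dots> = ennreal (\<Sum>k. integral\<^sup>L M (X k))"
    using summ by (intro suminf_ennreal2) (auto intro: integral_nonneg_AE simp: nonneg)
  finally have "AE x in M. (\<Sum>k. ennreal (X k x)) \<noteq> \<infinity>"
    by (intro nn_integral_noteq_infinite) auto
  then show ?thesis
  proof eventually_elim
    case (elim x)
    with nonneg have "summable (\<lambda>k. X k x)"
      by (intro summable_suminf_not_top) simp_all
    then show ?case
      by (rule summable_LIMSEQ_zero)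
  qed
qed

lemma (in prob_space) AE_indep_prod_tendsto_zero:
  fixes a :: "nat \<Rightarrow> 'a \<Rightarrow> real"
  assumes indep: "indep_vars (\<lambda>_. borel) a UNIV"
    and nonneg: "\<And>r x. 0 \<le> a r x"
    and int: "\<And>r. integrable M (a r)"
    and mean: "\<And>r. expectation (a r) = \<rho>"
    and "\<rho> < 1"
  shows "AE x in M. \<forall>s. (\<lambda>t. \<Prod>r\<in>{s..t}. a r x) \<longlonglongrightarrow> 0"
  unfolding AE_all_countable
proof
  fix s
  have indep_block: "indep_vars (\<lambda>_. borel) a {s..k + s}" for k
    using indep_vars_subset[OF indep] by simp
  have "integrable M (\<lambda>x. \<Prod>r\<in>{s..k + s}. a r x)" for k
    by (rule indep_vars_integrable[OF _ indep_block]) (auto simp: int)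
  moreover have "expectation (\<lambda>x. \<Prod>r\<in>{s..k + s}. a r x) = \<rho> ^ (k + 1)" for k
    by (subst indep_vars_lebesgue_integral[OF _ indep_block]) (auto simp: int mean)
  moreover have "0 \<le> expectation (a 0)"
    by (rule integral_nonneg_AE) (simp add: nonneg)
  then have "0 \<le> \<rho>"
    by (simp add: mean)
  then have "summable (\<lambda>k. \<rho> ^ (k + 1))"
    using \<open>\<rho> < 1\<close> by (simp add: summable_mult summable_geometric)
  ultimately have "AE x in M. (\<lambda>k. \<Prod>r\<in>{s..k + s}. a r x) \<longlonglongrightarrow> 0"
    by (intro AE_tendsto_zero_if_summable_integral) (auto intro: prod_nonneg nonneg)
  then show "AE x in M. (\<lambda>t. \<Prod>r\<in>{s..t}. a r x) \<longlonglongrightarrow> 0"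
    by eventually_elim (rule LIMSEQ_offset[where k=s])
qed

theorem lemma2:
  fixes M :: "'w measure"
    and W :: "nat \<Rightarrow> 'w \<Rightarrow> real^('s::finite+'f::finite)^('s+'f)"
  assumes "prob_space M"
    and indep: "prob_space.indep_vars M (\<lambda>_. borel) W UNIV"
    and ident: "\<And>t. distr M borel (W t) = distr M borel (W 0)"
    and stoch: "\<And>t \<omega>. \<omega> \<in> space M \<Longrightarrow> row_stochastic (W t \<omega>)"
    and block: "\<And>t \<omega>. \<omega> \<in> space M \<Longrightarrow>
                  W t \<omega> = blockmat (mat 1) 0 (blkB (W t \<omega>)) (blkD (W t \<omega>))"
    and Dbar_lt: "spectral_norm (blkD (integral\<^sup>L M (W 0))) < 1"
    and E_norm: "\<And>t. integral\<^sup>L M (\<lambda>\<omega>. spectral_norm (blkD (W t \<omega>)))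
                       = spectral_norm (blkD (integral\<^sup>L M (W 0)))"
  shows "(AE \<omega> in M. \<forall>s. (\<lambda>t. lprod (\<lambda>q. blkD (W q \<omega>)) s t) \<longlonglongrightarrow> 0)
       \<and> (AE \<omega> in M. \<forall>s. (\<lambda>t. lprod (\<lambda>q. W q \<omega>) s t
              - blockmat (mat 1) 0 (accB (\<lambda>q. blkB (W q \<omega>)) (\<lambda>q. blkD (W q \<omega>)) s t) 0)
            \<longlonglongrightarrow> 0)
       \<and> (AE \<omega> in M. \<forall>s. \<exists>C. \<forall>t\<ge>s.
              norm (accB (\<lambda>q. blkB (W q \<omega>)) (\<lambda>q. blkD (W q \<omega>)) s t) \<le> C)"
proof -
  interpret prob_space M by fact
  define a where "a = (\<lambda>r \<omega>. spectral_norm (blkD (W r \<omega>)))"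
  have a_indep: "indep_vars (\<lambda>_. borel) a UNIV"
    unfolding a_def using spectral_norm_blkD_measurable
    by (intro indep_vars_compose2[OF indep, of "\<lambda>_ A. spectral_norm (blkD A)"]) simp
  have a_int: "integrable M (a r)" for r
  proof (rule integrable_const_bound)
    show "AE \<omega> in M. norm (a r \<omega>) \<le> real CARD('f) * real CARD('f)"
      unfolding a_def
      by (intro AE_I2) (simp add: spectral_norm_nonneg spectral_norm_blkD_le_if_row_stochastic stoch)
    have "W r \<in> borel_measurable M"
      using indep unfolding indep_vars_def by auto
    then show "a r \<in> borel_measurable M"
      unfolding a_def using spectral_norm_blkD_measurable by measurable
  qed
  have D_lim: "AE \<omega> in M. \<forall>s. lprod (\<lambda>q. blkD (W q \<omega>)) s \<longlonglongrightarrow> 0"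
    using AE_indep_prod_tendsto_zero[OF a_indep _ a_int _ Dbar_lt]
    unfolding a_def
    by (simp add: E_norm spectral_norm_nonneg) (auto elim!: AE_mp intro: tendsto_lprod_zero)
  moreover have "AE \<omega> in M. \<forall>s. (\<lambda>t. lprod (\<lambda>q. W q \<omega>) s t
      - blockmat (mat 1) 0 (accB (\<lambda>q. blkB (W q \<omega>)) (\<lambda>q. blkD (W q \<omega>)) s t) 0) \<longlonglongrightarrow> 0"
    using D_lim AE_space
    by eventually_elim (blast intro: lprod_minus_limit_tendsto_zero block)
  moreover have "AE \<omega> in M. \<forall>s. \<exists>C. \<forall>t\<ge>s.
      norm (accB (\<lambda>q. blkB (W q \<omega>)) (\<lambda>q. blkD (W q \<omega>)) s t) \<le> C"
  proof (intro AE_I2 allI exI impI)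
    fix \<omega> and s t :: nat
    assume "\<omega> \<in> space M" "s \<le> t"
    then show "norm (accB (\<lambda>q. blkB (W q \<omega>)) (\<lambda>q. blkD (W q \<omega>)) s t) \<le> real CARD('f) * real CARD('s)"
      by (intro norm_accB_le block stoch)
  qed
  ultimately show ?thesis
    by blast
qed

end
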